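(* Let $n\ge2$ and $\alpha\in[0,1)$ with $\alpha\le1/n$. For $x,y>0$ put $Q_\alpha=Q_\alpha(x,y)=e^{\mathrm{i}\pi\alpha/2}x+e^{-\mathrm{i}\pi\alpha/2}y$ and $$F^\alpha_{n,0}(x,y)=\sum_{A\in\mathcal A_n,\ \mu(A)=0}Q_\alpha^{2\nu(A)}\,\overline{Q_\alpha}^{\,n(n-1)-2\nu(A)}.$$ Then $F^\alpha_{n,0}(x,y)>0$ for all $x,y>0$.
   Context: $\mathcal A_n$ is the set of $n\times n$ alternating sign matrices: matrices with entries in $\{0,1,-1\}$ such that every row and every column sums to $1$ and the nonzero entries in each row and each column alternate in sign. For $A=(A_{ij})\in\mathcal A_n$, $\mu(A)$ is the number of entries equal to $-1$, and $\nu(A)=\sum_{1\le i<i'\le n,\ 1\le j<j'\le n}A_{ij}A_{i'j'}$. (Matrices with $\mu(A)=0$ are exactly the $n\times n$ permutation matrices.) *)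

theory Defs
  imports Complex_Main
begin

text \<open>An n x n matrix is represented as a function nat => nat => int, with rows and
  columns indexed by 0..<n and entries outside this range equal to 0.\<close>

definition alt_signs :: "(nat \<Rightarrow> int) \<Rightarrow> nat \<Rightarrow> bool" where
  "alt_signs v n \<longleftrightarrow>
     (\<forall>j j'. j < j' \<and> j' < n \<and> v j \<noteq> 0 \<and> v j' \<noteq> 0 \<and>
        (\<forall>k. j < k \<and> k < j' \<longrightarrow> v k = 0) \<longrightarrow> v j' = - v j)"

definition ASM :: "nat \<Rightarrow> (nat \<Rightarrow> nat \<Rightarrow> int) set" where
  "ASM n = {A. (\<forall>i j. (n \<le> i \<or> n \<le> j) \<longrightarrow> A i j = 0)
              \<and> (\<forall>i<n. \<forall>j<n. A i j \<in> {0, 1, -1})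
              \<and> (\<forall>i<n. (\<Sum>j<n. A i j) = 1)
              \<and> (\<forall>j<n. (\<Sum>i<n. A i j) = 1)
              \<and> (\<forall>i<n. alt_signs (\<lambda>j. A i j) n)
              \<and> (\<forall>j<n. alt_signs (\<lambda>i. A i j) n)}"

definition asm_mu :: "nat \<Rightarrow> (nat \<Rightarrow> nat \<Rightarrow> int) \<Rightarrow> nat" where
  "asm_mu n A = card {(i, j). i < n \<and> j < n \<and> A i j = -1}"

definition asm_nu :: "nat \<Rightarrow> (nat \<Rightarrow> nat \<Rightarrow> int) \<Rightarrow> int" where
  "asm_nu n A = (\<Sum>i<n. \<Sum>i'<n. \<Sum>j<n. \<Sum>j'<n.
       if i < i' \<and> j < j' then A i j * A i' j' else 0)"

definition Qa :: "real \<Rightarrow> real \<Rightarrow> real \<Rightarrow> complex" where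
  "Qa \<alpha> x y = exp (\<i> * of_real (pi * \<alpha> / 2)) * of_real x
             + exp (- \<i> * of_real (pi * \<alpha> / 2)) * of_real y"

definition F0 :: "nat \<Rightarrow> real \<Rightarrow> real \<Rightarrow> real \<Rightarrow> complex" where
  "F0 n \<alpha> x y = (\<Sum>A \<in> {A \<in> ASM n. asm_mu n A = 0}.
      (Qa \<alpha> x y) powi (2 * asm_nu n A)
      * (cnj (Qa \<alpha> x y)) powi (int (n * (n - 1)) - 2 * asm_nu n A))"

end

theory Submission imports Defs begin

text \<open>An ASM without entries \<open>-1\<close> is a permutation matrix. Deleting the last row of a
  permutation matrix together with the column \<open>c\<close> of its \<open>1\<close> is a bijection onto the pairs
  \<open>(c, B)\<close> with \<open>c \<le> n\<close> and \<open>B\<close> of size \<open>n\<close>, and it lowers \<open>\<nu>\<close> by \<open>c\<close>. Hence \<open>\<nu>\<close> has the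
  inversion generating function, and with \<open>Q = Q\<^sub>\<alpha>(x, y)\<close> the sum factors as
  \<open>\<Prod>m<n. \<Sum>c\<le>m. Q^(2c) cnj(Q)^(2(m-c))\<close>. Writing \<open>Q = r e^(i\<theta>)\<close>, where \<open>\<theta> = 0\<close> or
  \<open>\<bar>\<theta>\<bar> < \<pi>\<alpha>/2 \<le> \<pi>/(2n)\<close>, the \<open>m\<close>-th factor is \<open>r^(2m) sin (2(m+1)\<theta>) / sin (2\<theta>)\<close>: a
  Dirichlet kernel evaluated before its first zero, hence positive.\<close>

definition perm_matrices :: "nat \<Rightarrow> (nat \<Rightarrow> nat \<Rightarrow> int) set" where
  "perm_matrices n = {A. (\<forall>i j. (n \<le> i \<or> n \<le> j) \<longrightarrow> A i j = 0)
      \<and> (\<forall>i<n. \<forall>j<n. A i j \<in> {0, 1})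
      \<and> (\<forall>i<n. (\<Sum>j<n. A i j) = 1)
      \<and> (\<forall>j<n. (\<Sum>i<n. A i j) = 1)}"

lemma sum_01_eq_1_unique:
  fixes f :: "'b \<Rightarrow> int"
  assumes "finite S" "\<forall>x\<in>S. f x \<in> {0, 1}" "sum f S = 1" "j \<in> S" "f j = 1" "k \<in> S" "k \<noteq> j"
  shows "f k = 0"
proof -
  have "sum f S = f j + sum f (S - {j})" using assms by (simp add: sum.remove)
  then have "sum f (S - {j}) = 0" using assms by simp
  moreover have "\<forall>x\<in>S - {j}. 0 \<le> f x" using assms(2) by auto
  ultimately show ?thesis using sum_nonneg_eq_0_iff[of "S - {j}" f] assms by blast
qed

lemma sum_01_eq_1_obtain:
  fixes f :: "'b \<Rightarrow> int"
  assumes "\<forall>x\<in>S. f x \<in> {0, 1}" "sum f S = 1"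
  obtains j where "j \<in> S" "f j = 1"
proof -
  have "\<exists>j\<in>S. f j \<noteq> 0" using assms(2) by (metis sum.neutral zero_neq_one)
  then show ?thesis using assms(1) that by auto
qed

lemma ASM_mu_0_eq_perm_matrices: "{A \<in> ASM n. asm_mu n A = 0} = perm_matrices n"
proof (intro set_eqI iffI)
  fix A assume "A \<in> {A \<in> ASM n. asm_mu n A = 0}"
  then have A: "A \<in> ASM n" and mu: "asm_mu n A = 0" by auto
  have "finite {(i, j). i < n \<and> j < n \<and> A i j = -1}"
    by (rule finite_subset[of _ "{..<n} \<times> {..<n}"]) auto
  then have "\<forall>i<n. \<forall>j<n. A i j \<noteq> -1" using mu by (auto simp: asm_mu_def)
  then show "A \<in> perm_matrices n" using A by (auto simp: ASM_def perm_matrices_def)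
next
  fix A assume A: "A \<in> perm_matrices n"
  have e: "\<forall>i<n. \<forall>j<n. A i j \<in> {0, 1}" and r: "\<forall>i<n. (\<Sum>j<n. A i j) = 1"
    and cl: "\<forall>j<n. (\<Sum>i<n. A i j) = 1"
    using A by (auto simp: perm_matrices_def)
  have "alt_signs (\<lambda>j. A i j) n" if "i < n" for i
    unfolding alt_signs_def
  proof (intro allI impI, elim conjE)
    fix j j' assume jj: "j < j'" "j' < n" "A i j \<noteq> 0" "A i j' \<noteq> 0"
    then have "A i j = 1" "A i j' = 1" using e[rule_format, of i j] e[rule_format, of i j'] that by auto
    moreover have "A i j' = 0"
      by (rule sum_01_eq_1_unique[of "{..<n}" "A i" j]) (use e r jj that calculation in auto)
    ultimately show "A i j' = - A i j" by simp
  qed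
  moreover have "alt_signs (\<lambda>i. A i j) n" if "j < n" for j
    unfolding alt_signs_def
  proof (intro allI impI, elim conjE)
    fix i i' assume ii: "i < i'" "i' < n" "A i j \<noteq> 0" "A i' j \<noteq> 0"
    then have "A i j = 1" "A i' j = 1" using e[rule_format, of i j] e[rule_format, of i' j] that by auto
    moreover have "A i' j = 0"
      by (rule sum_01_eq_1_unique[of "{..<n}" "\<lambda>i. A i j" i]) (use e cl ii that calculation in auto)
    ultimately show "A i' j = - A i j" by simp
  qed
  moreover have "{(i, j). i < n \<and> j < n \<and> A i j = -1} = {}" using e by fastforce
  then have "asm_mu n A = 0" unfolding asm_mu_def by (metis card.empty)
  ultimately show "A \<in> {A \<in> ASM n. asm_mu n A = 0}"
    using A by (auto simp: ASM_def perm_matrices_def)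
qed

subsection \<open>Adding a last row\<close>

definition skip :: "nat \<Rightarrow> nat \<Rightarrow> nat" where
  "skip c j = (if j < c then j else Suc j)"

lemma skip_less: "c \<le> n \<Longrightarrow> j < n \<Longrightarrow> skip c j < Suc n"
  by (simp add: skip_def)

lemma skip_neq: "skip c j \<noteq> c"
  by (simp add: skip_def)

lemma skip_less_skip_iff: "skip c j < skip c j' \<longleftrightarrow> j < j'"
  by (auto simp: skip_def)

lemma sum_lessThan_Suc_skip:
  fixes F :: "nat \<Rightarrow> 'a::comm_monoid_add"
  shows "c \<le> n \<Longrightarrow> F c = 0 \<Longrightarrow> (\<Sum>j<Suc n. F j) = (\<Sum>j<n. F (skip c j))"
proof (induction n arbitrary: c)
  case (Suc n)
  show ?case
  proof (cases "c = Suc n")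
    case True
    have "(\<Sum>j<Suc n. F (skip c j)) = (\<Sum>j<Suc n. F j)"
      by (rule sum.cong) (auto simp: skip_def True)
    then show ?thesis using Suc.prems True by simp
  next
    case False
    then have "c \<le> n" using Suc.prems by simp
    with Suc.IH[OF this Suc.prems(2)] show ?thesis by (simp add: skip_def)
  qed
qed simp

definition add_row :: "nat \<Rightarrow> nat \<Rightarrow> (nat \<Rightarrow> nat \<Rightarrow> int) \<Rightarrow> nat \<Rightarrow> nat \<Rightarrow> int" where
  "add_row n c B i j =
     (if i < n \<and> j < Suc n \<and> j \<noteq> c then B i (if j < c then j else j - 1)
      else if i = n \<and> j = c then 1 else 0)"

lemma add_row_skip: "i < n \<Longrightarrow> j < n \<Longrightarrow> c \<le> n \<Longrightarrow> add_row n c B i (skip c j) = B i j"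
  by (auto simp: add_row_def skip_def)

lemma add_row_column: "i < n \<Longrightarrow> add_row n c B i c = 0"
  by (simp add: add_row_def)

lemma add_row_in_perm_matrices:
  assumes B: "B \<in> perm_matrices n" and c: "c \<le> n"
  shows "add_row n c B \<in> perm_matrices (Suc n)"
proof -
  let ?A = "add_row n c B"
  have e: "\<forall>i<n. \<forall>j<n. B i j \<in> {0, 1}" and r: "\<forall>i<n. (\<Sum>j<n. B i j) = 1"
    and cl: "\<forall>j<n. (\<Sum>i<n. B i j) = 1"
    using B by (auto simp: perm_matrices_def)
  have entries: "?A i j \<in> {0, 1}" if "j < Suc n" for i j
  proof (cases "i < n \<and> j \<noteq> c")
    case True
    then have "(if j < c then j else j - 1) < n" using that c by auto
    then show ?thesis using e True that by (simp add: add_row_def)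
  qed (auto simp: add_row_def)
  have rows: "(\<Sum>j<Suc n. ?A i j) = 1" if "i < Suc n" for i
  proof (cases "i = n")
    case True
    have "(\<Sum>j<Suc n. ?A i j) = (\<Sum>j<Suc n. if j = c then 1 else 0)"
      by (rule sum.cong) (auto simp: add_row_def True)
    then show ?thesis using c by simp
  next
    case False
    then have "i < n" using that by simp
    have "(\<Sum>j<Suc n. ?A i j) = (\<Sum>j<n. ?A i (skip c j))"
      by (rule sum_lessThan_Suc_skip[OF c]) (simp add: add_row_def False)
    also have "\<dots> = (\<Sum>j<n. B i j)"
      by (rule sum.cong) (auto simp: add_row_skip \<open>i < n\<close> c)
    finally show ?thesis using r \<open>i < n\<close> by simp
  qed
  have cols: "(\<Sum>i<Suc n. ?A i j) = 1" if "j < Suc n" for j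
  proof (cases "j = c")
    case True
    have "(\<Sum>i<n. ?A i j) = 0" by (rule sum.neutral) (auto simp: add_row_def True)
    then show ?thesis by (simp add: add_row_def True)
  next
    case False
    let ?j = "if j < c then j else j - 1"
    have "(\<Sum>i<n. ?A i j) = (\<Sum>i<n. B i ?j)"
      by (rule sum.cong) (use that False in \<open>auto simp: add_row_def\<close>)
    moreover have "?j < n" using that False c by auto
    ultimately show ?thesis using cl False by (simp add: add_row_def)
  qed
  show ?thesis
    using c entries rows cols by (auto simp: perm_matrices_def add_row_def)
qed

lemma add_row_inj:
  assumes "c \<le> n" "B \<in> perm_matrices n" "B' \<in> perm_matrices n"
    and eq: "add_row n c B = add_row n c' B'"
  shows "c = c' \<and> B = B'"
proof -
  have "add_row n c B n c = add_row n c' B' n c" using eq by simp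
  then have cc: "c = c'" by (simp add: add_row_def split: if_splits)
  have "B i j = B' i j" for i j
  proof (cases "i < n \<and> j < n")
    case True
    then show ?thesis
      using eq cc add_row_skip[of i n j c B] add_row_skip[of i n j c B'] assms(1) by simp
  next
    case False
    then show ?thesis using assms(2,3) by (auto simp: perm_matrices_def)
  qed
  then show ?thesis using cc by auto
qed

lemma perm_matrices_Suc_obtain_add_row:
  assumes A: "A \<in> perm_matrices (Suc n)"
  obtains c B where "c \<le> n" "B \<in> perm_matrices n" "A = add_row n c B"
proof -
  have z: "\<forall>i j. (Suc n \<le> i \<or> Suc n \<le> j) \<longrightarrow> A i j = 0"
    and e: "\<forall>i<Suc n. \<forall>j<Suc n. A i j \<in> {0, 1}"
    and r: "\<forall>i<Suc n. (\<Sum>j<Suc n. A i j) = 1" and cl: "\<forall>j<Suc n. (\<Sum>i<Suc n. A i j) = 1"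
    using A by (auto simp: perm_matrices_def)
  obtain c where c: "c < Suc n" "A n c = 1"
    using sum_01_eq_1_obtain[of "{..<Suc n}" "A n"] e r by auto
  then have cn: "c \<le> n" by simp
  have last_row: "A n j = 0" if "j \<noteq> c" for j
    using sum_01_eq_1_unique[of "{..<Suc n}" "A n" c j] e r c z that by (cases "j < Suc n") auto
  have col_c: "A i c = 0" if "i < n" for i
    using sum_01_eq_1_unique[of "{..<Suc n}" "\<lambda>i. A i c" n i] e cl c that by auto
  define B where "B = (\<lambda>i j. if i < n \<and> j < n then A i (skip c j) else 0)"
  have "(\<Sum>j<n. B i j) = 1" if "i < n" for i
  proof -
    have "(\<Sum>j<n. B i j) = (\<Sum>j<n. A i (skip c j))" by (rule sum.cong) (auto simp: B_def that)
    also have "\<dots> = (\<Sum>j<Suc n. A i j)"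
      by (rule sum_lessThan_Suc_skip[symmetric, OF cn]) (simp add: col_c that)
    finally show ?thesis using r that by simp
  qed
  moreover have "(\<Sum>i<n. B i j) = 1" if "j < n" for j
  proof -
    have "(\<Sum>i<n. B i j) = (\<Sum>i<Suc n. A i (skip c j))"
      using last_row[OF skip_neq] by (simp add: B_def that)
    then show ?thesis using cl skip_less[OF cn that] by simp
  qed
  ultimately have "B \<in> perm_matrices n"
    using e skip_less[OF cn] by (auto simp: perm_matrices_def B_def)
  moreover have "A = add_row n c B"
  proof (intro ext)
    fix i j
    show "A i j = add_row n c B i j"
    proof (cases "i < n \<and> j < Suc n \<and> j \<noteq> c")
      case True
      then have "(if j < c then j else j - 1) < n" "skip c (if j < c then j else j - 1) = j"
        using cn by (auto simp: skip_def)
      then show ?thesis using True by (simp add: add_row_def B_def)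
    next
      case False
      then consider "i = n" | "Suc n \<le> i" | "Suc n \<le> j" | "j = c" "i < n" by linarith
      then show ?thesis
        by cases (use z c last_row col_c cn in \<open>auto simp: add_row_def\<close>)
    qed
  qed
  ultimately show ?thesis using cn that by blast
qed

lemma perm_matrices_Suc:
  "perm_matrices (Suc n) = (\<lambda>(c, B). add_row n c B) ` ({..n} \<times> perm_matrices n)"
proof
  show "perm_matrices (Suc n) \<subseteq> (\<lambda>(c, B). add_row n c B) ` ({..n} \<times> perm_matrices n)"
  proof
    fix A assume "A \<in> perm_matrices (Suc n)"
    then obtain c B where "c \<le> n" "B \<in> perm_matrices n" "A = add_row n c B"
      by (rule perm_matrices_Suc_obtain_add_row)
    then show "A \<in> (\<lambda>(c, B). add_row n c B) ` ({..n} \<times> perm_matrices n)" by force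
  qed
qed (auto intro: add_row_in_perm_matrices)

lemma inj_on_add_row: "inj_on (\<lambda>(c, B). add_row n c B) ({..n} \<times> perm_matrices n)"
  by (auto simp: inj_on_def dest: add_row_inj)

lemma perm_matrices_0: "perm_matrices 0 = {\<lambda>i j. 0}"
  by (auto simp: perm_matrices_def)

subsection \<open>The inversion statistic\<close>

lemma add_row_pairs_old_rows:
  assumes "i < n" "i' < n" "c \<le> n"
  shows "(\<Sum>j<Suc n. \<Sum>j'<Suc n. if i < i' \<and> j < j' then add_row n c B i j * add_row n c B i' j' else 0)
       = (\<Sum>j<n. \<Sum>j'<n. if i < i' \<and> j < j' then B i j * B i' j' else 0)"
    (is "(\<Sum>j<Suc n. \<Sum>j'<Suc n. ?h j j') = _")
proof -
  have col: "add_row n c B i c = 0" "add_row n c B i' c = 0"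
    using assms by (simp_all add: add_row_column)
  have inner: "(\<Sum>j'<Suc n. ?h j j') = (\<Sum>j'<n. ?h j (skip c j'))" for j
    by (rule sum_lessThan_Suc_skip[OF assms(3)]) (simp add: col)
  have "(\<Sum>j<Suc n. \<Sum>j'<Suc n. ?h j j') = (\<Sum>j<Suc n. \<Sum>j'<n. ?h j (skip c j'))"
    by (simp only: inner)
  also have "\<dots> = (\<Sum>j<n. \<Sum>j'<n. ?h (skip c j) (skip c j'))"
    by (rule sum_lessThan_Suc_skip[OF assms(3)]) (simp add: col cong: if_cong)
  also have "\<dots> = (\<Sum>j<n. \<Sum>j'<n. if i < i' \<and> j < j' then B i j * B i' j' else 0)"
    by (intro sum.cong refl) (use assms in \<open>simp add: add_row_skip skip_less_skip_iff\<close>)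
  finally show ?thesis .
qed

text \<open>The new row has its \<open>1\<close> in column \<open>c\<close>, so its pairs with the old rows count the
  \<open>1\<close>s of \<open>B\<close> in the \<open>c\<close> columns to the left, one per column.\<close>

lemma add_row_pairs_new_row:
  assumes B: "B \<in> perm_matrices n" and c: "c \<le> n"
  shows "(\<Sum>i<n. \<Sum>j<Suc n. \<Sum>j'<Suc n. if j < j' then add_row n c B i j * add_row n c B n j' else 0)
       = int c"
proof -
  have cl: "\<forall>j<n. (\<Sum>i<n. B i j) = 1" using B by (auto simp: perm_matrices_def)
  have "(\<Sum>i<n. \<Sum>j<Suc n. \<Sum>j'<Suc n. if j < j' then add_row n c B i j * add_row n c B n j' else 0)
      = (\<Sum>i<n. \<Sum>j<Suc n. if j < c then add_row n c B i j else 0)"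
  proof (intro sum.cong refl)
    fix i j assume "i \<in> {..<n}"
    then have "(\<Sum>j'<Suc n. if j < j' then add_row n c B i j * add_row n c B n j' else 0)
        = (\<Sum>j'<Suc n. if j' = c then (if j < c then add_row n c B i j else 0) else 0)"
      by (intro sum.cong refl) (auto simp: add_row_def)
    then show "(\<Sum>j'<Suc n. if j < j' then add_row n c B i j * add_row n c B n j' else 0)
        = (if j < c then add_row n c B i j else 0)" using c by simp
  qed
  also have "\<dots> = (\<Sum>j<Suc n. \<Sum>i<n. if j < c then add_row n c B i j else 0)"
    by (rule sum.swap)
  also have "\<dots> = (\<Sum>j<Suc n. if j < c then 1 else 0)"
  proof (intro sum.cong refl)
    fix j
    have "j < c \<Longrightarrow> (\<Sum>i<n. add_row n c B i j) = (\<Sum>i<n. B i j)"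
      by (intro sum.cong refl) (use c in \<open>auto simp: add_row_def\<close>)
    then show "(\<Sum>i<n. if j < c then add_row n c B i j else 0) = (if j < c then 1 else 0)"
      using cl c by simp
  qed
  also have "\<dots> = (\<Sum>j\<in>{j \<in> {..<Suc n}. j < c}. 1)"
    by (rule sum.inter_filter[symmetric]) simp
  also have "{j \<in> {..<Suc n}. j < c} = {..<c}"
    using c by auto
  finally show ?thesis by simp
qed

lemma asm_nu_add_row:
  assumes B: "B \<in> perm_matrices n" and c: "c \<le> n"
  shows "asm_nu (Suc n) (add_row n c B) = asm_nu n B + int c"
proof -
  let ?A = "add_row n c B"
  define G where "G i i' = (\<Sum>j<Suc n. \<Sum>j'<Suc n. if i < i' \<and> j < j' then ?A i j * ?A i' j' else 0)"
    for i i'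
  have last: "(\<Sum>i'<Suc n. G n i') = 0"
    by (rule sum.neutral) (auto simp: G_def)
  have "asm_nu (Suc n) ?A = (\<Sum>i<Suc n. \<Sum>i'<Suc n. G i i')"
    by (simp only: asm_nu_def G_def)
  also have "\<dots> = (\<Sum>i<n. \<Sum>i'<Suc n. G i i')"
    by (subst sum.lessThan_Suc) (simp only: last add_0_right)
  also have "\<dots> = (\<Sum>i<n. \<Sum>i'<n. G i i') + (\<Sum>i<n. G i n)"
    by (simp only: sum.lessThan_Suc sum.distrib)
  also have "(\<Sum>i<n. \<Sum>i'<n. G i i') = asm_nu n B"
  proof -
    have "G i i' = (\<Sum>j<n. \<Sum>j'<n. if i < i' \<and> j < j' then B i j * B i' j' else 0)"
      if "i < n" "i' < n" for i i'
      unfolding G_def using that c by (rule add_row_pairs_old_rows)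
    then show ?thesis by (simp add: asm_nu_def)
  qed
  also have "(\<Sum>i<n. G i n) = int c"
    using add_row_pairs_new_row[OF B c] by (simp add: G_def)
  finally show ?thesis .
qed

text \<open>Integer exponents spare us proving \<open>0 \<le> \<nu> \<le> n choose 2\<close>.\<close>

lemma sum_perm_matrices_asm_nu:
  fixes a b :: "'a::field"
  assumes "a \<noteq> 0" "b \<noteq> 0"
  shows "(\<Sum>A\<in>perm_matrices n. a powi asm_nu n A * b powi (int (n choose 2) - asm_nu n A))
       = (\<Prod>m<n. \<Sum>c\<le>m. a ^ c * b ^ (m - c))"
proof (induction n)
  case 0
  then show ?case by (simp add: perm_matrices_0 asm_nu_def numeral_2_eq_2)
next
  case (Suc n)
  let ?w = "\<lambda>n A. a powi asm_nu n A * b powi (int (n choose 2) - asm_nu n A)"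
  have step: "?w (Suc n) (add_row n c B) = ?w n B * (a ^ c * b ^ (n - c))"
    if "B \<in> perm_matrices n" "c \<le> n" for B c
  proof -
    let ?\<nu> = "asm_nu n B"
    have e: "int (Suc n choose 2) - (?\<nu> + int c) = (int (n choose 2) - ?\<nu>) + int (n - c)"
      using that by (simp add: numeral_2_eq_2)
    have "b powi (int (Suc n choose 2) - (?\<nu> + int c)) = b powi (int (n choose 2) - ?\<nu>) * b ^ (n - c)"
      unfolding e using assms by (simp add: power_int_add)
    moreover have "a powi (?\<nu> + int c) = a powi ?\<nu> * a ^ c"
      using assms by (simp add: power_int_add)
    ultimately show ?thesis
      using that by (simp add: asm_nu_add_row mult_ac)
  qed
  have "(\<Sum>A\<in>perm_matrices (Suc n). ?w (Suc n) A) = (\<Sum>(c, B)\<in>{..n} \<times> perm_matrices n. ?w (Suc n) (add_row n c B))"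
    unfolding perm_matrices_Suc sum.reindex[OF inj_on_add_row] by (simp add: case_prod_unfold)
  also have "\<dots> = (\<Sum>c\<le>n. \<Sum>B\<in>perm_matrices n. ?w n B * (a ^ c * b ^ (n - c)))"
    by (simp add: sum.cartesian_product[symmetric] step)
  also have "\<dots> = (\<Sum>B\<in>perm_matrices n. ?w n B) * (\<Sum>c\<le>n. a ^ c * b ^ (n - c))"
    by (simp add: sum_distrib_left sum_distrib_right sum.swap[of _ "{..n}"])
  finally show ?case using Suc.IH by simp
qed

lemma F0_eq_prod:
  assumes "Qa \<alpha> x y \<noteq> 0"
  shows "F0 n \<alpha> x y = (\<Prod>m<n. \<Sum>c\<le>m. (Qa \<alpha> x y ^ 2) ^ c * cnj (Qa \<alpha> x y ^ 2) ^ (m - c))"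
proof -
  let ?Q = "Qa \<alpha> x y"
  have "even (n * (n - 1))" by (cases n) auto
  then have "int (n * (n - 1)) = 2 * int (n choose 2)"
    unfolding choose_two by (metis dvd_mult_div_cancel of_nat_mult of_nat_numeral)
  then have "?Q powi (2 * \<nu>) * cnj ?Q powi (int (n * (n - 1)) - 2 * \<nu>)
      = (?Q ^ 2) powi \<nu> * cnj (?Q ^ 2) powi (int (n choose 2) - \<nu>)" for \<nu>
    by (simp add: power_int_power right_diff_distrib)
  then show ?thesis
    unfolding F0_def ASM_mu_0_eq_perm_matrices
    using sum_perm_matrices_asm_nu[of "?Q ^ 2" "cnj (?Q ^ 2)" n] assms by simp
qed

subsection \<open>A Dirichlet kernel\<close>

lemma sin_mult_sum_cis_symmetric:
  "complex_of_real (sin t) * (\<Sum>c\<le>m. cis (t * (2 * real c - real m)))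
     = complex_of_real (sin ((real m + 1) * t))"
proof -
  define f where "f c = cis (t * (2 * real c - real m - 1))" for c :: nat
  have two_i_sin: "complex_of_real (2 * sin s) * \<i> = cis s - cis (- s)" for s
    by (simp add: complex_eq_iff)
  have "complex_of_real (2 * sin t) * \<i> * (\<Sum>c\<le>m. cis (t * (2 * real c - real m)))
      = (\<Sum>c<Suc m. f (Suc c) - f c)"
    unfolding two_i_sin lessThan_Suc_atMost sum_distrib_left
    by (intro sum.cong refl) (simp add: f_def cis_mult algebra_simps)
  also have "\<dots> = f (Suc m) - f 0"
    by (rule sum_lessThan_telescope)
  also have "\<dots> = complex_of_real (2 * sin ((real m + 1) * t)) * \<i>"
  proof -
    have args: "t * (2 * real (Suc m) - real m - 1) = (real m + 1) * t"
      "t * (2 * real 0 - real m - 1) = - ((real m + 1) * t)"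
      by (simp_all add: algebra_simps)
    show ?thesis unfolding two_i_sin f_def args ..
  qed
  finally show ?thesis
    by (simp add: mult.commute mult.left_commute)
qed

lemma sum_cis_symmetric_pos:
  fixes t :: real
  assumes "\<bar>t\<bar> * (real m + 1) < pi"
  shows "\<exists>D>0. (\<Sum>c\<le>m. cis (t * (2 * real c - real m))) = complex_of_real D"
proof (cases "t = 0")
  case True
  then show ?thesis by (intro exI[of _ "real m + 1"]) auto
next
  case False
  have "\<bar>t\<bar> \<le> \<bar>t\<bar> * (real m + 1)" by (simp add: ring_distribs)
  then have "\<bar>t\<bar> < pi" using assms by linarith
  then have "0 < sin \<bar>t\<bar>" "0 < sin ((real m + 1) * \<bar>t\<bar>)"
    using assms False by (auto intro!: sin_gt_zero simp: mult.commute)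
  moreover have "sin ((real m + 1) * t) / sin t = sin ((real m + 1) * \<bar>t\<bar>) / sin \<bar>t\<bar>"
    by (cases "t \<ge> 0") auto
  ultimately have "sin ((real m + 1) * t) / sin t > 0" "sin t \<noteq> 0"
    by (auto simp: abs_if split: if_splits)
  then show ?thesis
    using sin_mult_sum_cis_symmetric[of t m]
    by (intro exI[of _ "sin ((real m + 1) * t) / sin t"]) (auto simp: field_simps)
qed

lemma sum_power_cnj_rcis:
  "(\<Sum>c\<le>m. rcis \<rho> \<phi> ^ c * cnj (rcis \<rho> \<phi>) ^ (m - c))
     = complex_of_real (\<rho> ^ m) * (\<Sum>c\<le>m. cis (\<phi> * (2 * real c - real m)))"
  unfolding sum_distrib_left
proof (intro sum.cong refl)
  fix c assume "c \<in> {..m}"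
  then have "c + (m - c) = m" "real c * \<phi> - real (m - c) * \<phi> = \<phi> * (2 * real c - real m)"
    by (auto simp: algebra_simps)
  moreover have "cnj (rcis \<rho> \<phi>) = rcis \<rho> (- \<phi>)"
    by (simp add: rcis_def cis_cnj)
  ultimately show "rcis \<rho> \<phi> ^ c * cnj (rcis \<rho> \<phi>) ^ (m - c)
      = complex_of_real (\<rho> ^ m) * cis (\<phi> * (2 * real c - real m))"
    by (simp add: DeMoivre2 rcis_mult power_add[symmetric]) (simp add: rcis_def)
qed

lemma sum_power_cnj_rcis_pos:
  assumes "\<rho> > 0" "\<bar>\<phi>\<bar> * (real m + 1) < pi"
  shows "\<exists>D>0. (\<Sum>c\<le>m. rcis \<rho> \<phi> ^ c * cnj (rcis \<rho> \<phi>) ^ (m - c)) = complex_of_real D"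
proof -
  obtain D where "D > 0" "(\<Sum>c\<le>m. cis (\<phi> * (2 * real c - real m))) = complex_of_real D"
    using sum_cis_symmetric_pos[OF assms(2)] by blast
  then show ?thesis
    using assms(1) by (intro exI[of _ "\<rho> ^ m * D"]) (simp add: sum_power_cnj_rcis)
qed

subsection \<open>The argument of \<open>Q\<^sub>\<alpha>\<close>\<close>

text \<open>\<open>Q\<^sub>\<alpha> = (x + y) cos \<phi> + \<i> (x - y) sin \<phi>\<close> with \<open>\<phi> = \<pi>\<alpha>/2\<close>, so \<open>tan \<theta> = tan \<phi> (x - y)/(x + y)\<close>
  and \<open>\<bar>x - y\<bar> < x + y\<close> gives \<open>\<bar>\<theta>\<bar> < \<phi>\<close> unless \<open>\<phi> = 0\<close>.\<close>

lemma Qa_polar: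
  assumes "0 \<le> \<alpha>" "\<alpha> < 1" "0 < x" "0 < y"
  obtains r \<theta> where "r > 0" "Qa \<alpha> x y = rcis r \<theta>" "\<theta> = 0 \<or> \<bar>\<theta>\<bar> < pi * \<alpha> / 2"
proof -
  define \<phi> where "\<phi> = pi * \<alpha> / 2"
  define Q where "Q = Qa \<alpha> x y"
  have \<phi>: "0 \<le> \<phi>" "\<phi> < pi / 2" using assms by (simp_all add: \<phi>_def)
  then have cos_\<phi>: "cos \<phi> > 0" by (intro cos_gt_zero_pi) auto
  have "exp (\<i> * complex_of_real \<phi>) = cis \<phi>" "exp (- \<i> * complex_of_real \<phi>) = cis (- \<phi>)"
    by (simp_all add: cis_conv_exp)
  then have Re_Q: "Re Q = (x + y) * cos \<phi>" and Im_Q: "Im Q = (x - y) * sin \<phi>"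
    by (simp_all add: Q_def Qa_def \<phi>_def algebra_simps)
  have Re_Q_pos: "Re Q > 0" using Re_Q cos_\<phi> assms by simp
  define u where "u = Im Q / Re Q"
  define \<theta> where "\<theta> = arctan u"
  have cos_\<theta>: "cos \<theta> > 0"
    unfolding \<theta>_def using arctan_bounded[of u] by (intro cos_gt_zero_pi) auto
  define r where "r = Re Q / cos \<theta>"
  have "r > 0" using Re_Q_pos cos_\<theta> by (simp add: r_def)
  moreover have "Q = rcis r \<theta>"
  proof -
    have "sin \<theta> = u * cos \<theta>"
      using tan_arctan[of u] cos_\<theta> by (simp add: \<theta>_def tan_def field_simps)
    then show ?thesis
      using cos_\<theta> Re_Q_pos by (simp add: complex_eq_iff r_def u_def field_simps)
  qed
  moreover have "\<theta> = 0 \<or> \<bar>\<theta>\<bar> < \<phi>"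
  proof (cases "\<phi> = 0")
    case True
    then show ?thesis by (simp add: \<theta>_def u_def Im_Q)
  next
    case False
    then have sin_\<phi>: "sin \<phi> > 0" using \<phi> by (intro sin_gt_zero) auto
    have "\<bar>u\<bar> = \<bar>x - y\<bar> * sin \<phi> / ((x + y) * cos \<phi>)"
      using sin_\<phi> cos_\<phi> assms by (simp add: u_def Im_Q Re_Q abs_mult)
    also have "\<dots> < (x + y) * sin \<phi> / ((x + y) * cos \<phi>)"
      using sin_\<phi> cos_\<phi> assms by (intro divide_strict_right_mono mult_strict_right_mono) auto
    also have "\<dots> = tan \<phi>" using assms by (simp add: tan_def)
    finally have "\<bar>u\<bar> < tan \<phi>" .
    moreover have "arctan (tan \<phi>) = \<phi>" using \<phi> by (intro arctan_tan) auto
    ultimately have "arctan u < \<phi>" "arctan (- u) < \<phi>"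
      by (metis abs_less_iff arctan_less_iff)+
    then show ?thesis by (simp add: \<theta>_def arctan_minus abs_less_iff)
  qed
  ultimately show ?thesis using that by (simp add: Q_def \<phi>_def)
qed

theorem proposition3:
  fixes n :: nat and \<alpha> x y :: real
  assumes "n \<ge> 2" and "0 \<le> \<alpha>" and "\<alpha> < 1" and "\<alpha> \<le> 1 / real n"
    and "x > 0" and "y > 0"
  shows "Im (F0 n \<alpha> x y) = 0 \<and> Re (F0 n \<alpha> x y) > 0"
proof -
  obtain r \<theta> where r: "r > 0" and Q: "Qa \<alpha> x y = rcis r \<theta>"
    and \<theta>: "\<theta> = 0 \<or> \<bar>\<theta>\<bar> < pi * \<alpha> / 2"
    using Qa_polar assms by blast
  have Q2: "Qa \<alpha> x y ^ 2 = rcis (r ^ 2) (2 * \<theta>)"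
    unfolding Q DeMoivre2 by simp
  have \<theta>_bound: "2 * \<bar>\<theta>\<bar> * real n < pi"
  proof (cases "\<theta> = 0")
    case False
    then have "2 * \<bar>\<theta>\<bar> * real n < pi * \<alpha> * real n"
      using \<theta> assms(1) by (intro mult_strict_right_mono) auto
    also have "\<dots> \<le> pi"
      using assms(1,4) by (simp add: field_simps)
    finally show ?thesis .
  qed simp
  have "\<exists>D>0. (\<Sum>c\<le>m. (Qa \<alpha> x y ^ 2) ^ c * cnj (Qa \<alpha> x y ^ 2) ^ (m - c)) = complex_of_real D"
    if "m < n" for m
  proof -
    have "\<bar>2 * \<theta>\<bar> * (real m + 1) \<le> 2 * \<bar>\<theta>\<bar> * real n"
      using that by (simp add: abs_mult mult_left_mono)
    then show ?thesis
      unfolding Q2 using r \<theta>_bound by (intro sum_power_cnj_rcis_pos) auto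
  qed
  then obtain D where D: "\<And>m. m < n \<Longrightarrow> D m > 0 \<and>
      (\<Sum>c\<le>m. (Qa \<alpha> x y ^ 2) ^ c * cnj (Qa \<alpha> x y ^ 2) ^ (m - c)) = complex_of_real (D m)"
    by metis
  have "F0 n \<alpha> x y = (\<Prod>m<n. \<Sum>c\<le>m. (Qa \<alpha> x y ^ 2) ^ c * cnj (Qa \<alpha> x y ^ 2) ^ (m - c))"
    using Q r by (intro F0_eq_prod) simp
  also have "\<dots> = (\<Prod>m<n. complex_of_real (D m))"
    using D by (intro prod.cong) auto
  finally have "F0 n \<alpha> x y = complex_of_real (\<Prod>m<n. D m)" by simp
  moreover have "(\<Prod>m<n. D m) > 0" using D by (intro prod_pos) auto
  ultimately show ?thesis by (metis Im_complex_of_real Re_complex_of_real)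
qed

end
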